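(* Let $S$ be a MANS-semigroup with $\mathrm{msg}(S)=\{n_1<n_2<\cdots<n_e<n_{e+1}\}$, where $e\geq 2$. Then $S'=\langle n_1,n_2,\ldots,n_e\rangle$ is a MANS-semigroup with $\mathrm{e}(S')=\mathrm{e}(S)-1$.
   Context: $\mathbb{N}=\{0,1,2,\ldots\}$. A numerical semigroup is a subset $S\subseteq\mathbb{N}$ closed under addition, containing $0$, with $\mathbb{N}\setminus S$ finite; $\langle A\rangle$ is the submonoid generated by $A$; $\mathrm{msg}(S)$ is the unique finite minimal system of generators and $\mathrm{e}(S)=|\mathrm{msg}(S)|$. $S$ is a MANS-semigroup if $w(1)<\cdots<w(\mathrm{m}(S)-1)$, where $\mathrm{m}(S)$ is the least element of $S\setminus\{0\}$ and $w(i)$ the least element of $S$ congruent to $i$ modulo $\mathrm{m}(S)$. *)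

theory Defs
  imports Main
begin

definition numerical_semigroup :: "nat set \<Rightarrow> bool" where
  "numerical_semigroup S \<longleftrightarrow>
     0 \<in> S \<and> (\<forall>x\<in>S. \<forall>y\<in>S. x + y \<in> S) \<and> finite (UNIV - S)"

inductive_set monoid_gen :: "nat set \<Rightarrow> nat set" for A :: "nat set" where
  zero: "0 \<in> monoid_gen A"
| step: "a \<in> A \<Longrightarrow> x \<in> monoid_gen A \<Longrightarrow> a + x \<in> monoid_gen A"

definition is_minimal_gen_system :: "nat set \<Rightarrow> nat set \<Rightarrow> bool" where
  "is_minimal_gen_system A S \<longleftrightarrow>
     monoid_gen A = S \<and> (\<forall>B. B \<subset> A \<longrightarrow> monoid_gen B \<noteq> S)"

definition msg :: "nat set \<Rightarrow> nat set" where
  "msg S = (THE A. finite A \<and> is_minimal_gen_system A S)"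

definition embdim :: "nat set \<Rightarrow> nat" where
  "embdim S = card (msg S)"

definition multiplicity :: "nat set \<Rightarrow> nat" where
  "multiplicity S = (LEAST x. x \<in> S \<and> x \<noteq> 0)"

definition apery_w :: "nat set \<Rightarrow> nat \<Rightarrow> nat" where
  "apery_w S i = (LEAST x. x \<in> S \<and> x mod multiplicity S = i mod multiplicity S)"

definition MANS :: "nat set \<Rightarrow> bool" where
  "MANS S \<longleftrightarrow> numerical_semigroup S \<and>
     (\<forall>i j. 1 \<le> i \<longrightarrow> i < j \<longrightarrow> j \<le> multiplicity S - 1 \<longrightarrow> apery_w S i < apery_w S j)"

end

theory Submission imports Defs begin

(* Let m = n_1 and S' = <n_1, ..., n_e>. Every element of S below n_{e+1} already lies in S'.
   If a generator n_k (k <= e) has residue r <> 0 modulo m, the MANS property gives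
   w(r - 1) < w(r) <= n_k, so S' contains an element smaller than n_k of residue r - 1 (just 0
   when r = 1). Replacing such a summand in a factorisation of w'(i + 1) produces a smaller
   element of S' of residue i, whence w'(i) < w'(i + 1). S' is a numerical semigroup because it
   contains m and w(1) <= n_2 < n_{e+1}, a unit modulo m; and n_1, ..., n_e are its minimal
   generators since they are irreducible already in the larger semigroup S. *)

definition submonoid :: "nat set \<Rightarrow> bool" where
  "submonoid S \<longleftrightarrow> 0 \<in> S \<and> (\<forall>x\<in>S. \<forall>y\<in>S. x + y \<in> S)"

lemma numerical_semigroup_iff: "numerical_semigroup S \<longleftrightarrow> submonoid S \<and> finite (UNIV - S)"
  unfolding numerical_semigroup_def submonoid_def by blast

lemma numerical_semigroup_eventually_mem:
  "numerical_semigroup S \<Longrightarrow> \<exists>N. \<forall>x\<ge>N. x \<in> S"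
  unfolding numerical_semigroup_def finite_nat_set_iff_bounded by (meson Diff_iff UNIV_I not_le)

section \<open>Generated submonoids\<close>

lemma monoid_gen_add: "x \<in> monoid_gen A \<Longrightarrow> y \<in> monoid_gen A \<Longrightarrow> x + y \<in> monoid_gen A"
  by (induction x rule: monoid_gen.induct) (auto simp: add.assoc intro: monoid_gen.step)

lemma submonoid_monoid_gen: "submonoid (monoid_gen A)"
  unfolding submonoid_def by (auto intro: monoid_gen.zero monoid_gen_add)

lemma subset_monoid_gen: "A \<subseteq> monoid_gen A"
  using monoid_gen.step[OF _ monoid_gen.zero] by fastforce

lemma monoid_gen_least:
  assumes "A \<subseteq> T" "submonoid T"
  shows "monoid_gen A \<subseteq> T"
proof
  fix x assume "x \<in> monoid_gen A"
  then show "x \<in> T" by induction (use assms in \<open>auto simp: submonoid_def\<close>)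
qed

lemma monoid_gen_mono: "A \<subseteq> B \<Longrightarrow> monoid_gen A \<subseteq> monoid_gen B"
  by (meson monoid_gen_least order_trans subset_monoid_gen submonoid_monoid_gen)

lemma submonoid_mult_mem: "submonoid S \<Longrightarrow> m \<in> S \<Longrightarrow> k * m \<in> S"
  by (induction k) (auto simp: submonoid_def)

lemma monoid_gen_remove_greater: "x \<in> monoid_gen A \<Longrightarrow> x < a \<Longrightarrow> x \<in> monoid_gen (A - {a})"
  by (induction x rule: monoid_gen.induct) (auto intro: monoid_gen.intros)

lemma monoid_gen_nondvd_summand:
  assumes "x \<in> monoid_gen A" "\<not> m dvd x"
  shows "\<exists>a\<in>A. \<not> m dvd a \<and> a \<le> x \<and> x - a \<in> monoid_gen A"
  using assms
proof (induction x rule: monoid_gen.induct)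
  case (step a x)
  show ?case
  proof (cases "m dvd a")
    case True
    with step obtain b where "b \<in> A" "\<not> m dvd b" "b \<le> x" "x - b \<in> monoid_gen A"
      by (auto simp: dvd_add_right_iff)
    with step.hyps show ?thesis
      by (metis add_diff_assoc monoid_gen.step trans_le_add2)
  qed (use step in auto)
qed simp

lemma numerical_semigroup_if_residue_one:
  assumes "submonoid T" "0 < m" "m \<in> T" "u \<in> T" "u mod m = 1 mod m"
  shows "numerical_semigroup T"
proof -
  have "x \<in> T" if "m * u \<le> x" for x
  proof -
    define k where "k = x mod m"
    have "k < m" using assms(2) by (simp add: k_def)
    then have "k * u \<le> x" using that by (meson dual_order.trans less_imp_le mult_le_mono1)
    have "(k * u) mod m = x mod m"
      using assms(5) unfolding k_def by (metis mod_mod_trivial mod_mult_right_eq nat_mult_1_right)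
    then obtain q where q: "x = k * u + q * m"
      using \<open>k * u \<le> x\<close> by (metis le_add_diff_inverse mod_eq_dvd_iff_nat dvdE mult.commute)
    have "k * u \<in> T" "q * m \<in> T" using assms submonoid_mult_mem by blast+
    then show "x \<in> T" using assms(1) q by (simp add: submonoid_def)
  qed
  then have "UNIV - T \<subseteq> {..<m * u}" by (auto simp: not_le[symmetric])
  then show ?thesis using assms(1) finite_subset by (auto simp: numerical_semigroup_iff)
qed

section \<open>Irreducible elements and minimal systems of generators\<close>

definition irreducibles :: "nat set \<Rightarrow> nat set" where
  "irreducibles S = {x \<in> S. x \<noteq> 0 \<and> (\<forall>s\<in>S. \<forall>t\<in>S. x = s + t \<longrightarrow> s = 0 \<or> t = 0)}"

lemma irreduciblesD:
  "x \<in> irreducibles S \<Longrightarrow> s \<in> S \<Longrightarrow> t \<in> S \<Longrightarrow> x = s + t \<Longrightarrow> s = 0 \<or> t = 0"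
  unfolding irreducibles_def by blast

lemma irreducibles_subset_generators: "irreducibles (monoid_gen A) \<subseteq> A"
proof
  fix x assume irr: "x \<in> irreducibles (monoid_gen A)"
  then have "x \<in> monoid_gen A" by (simp add: irreducibles_def)
  then show "x \<in> A" using irr
  proof induction
    case (step a y)
    then have "a = 0 \<or> y = 0" using subset_monoid_gen unfolding irreducibles_def by blast
    then show ?case using step by auto
  qed (simp add: irreducibles_def)
qed

lemma monoid_gen_irreducibles:
  assumes "submonoid S"
  shows "monoid_gen (irreducibles S) = S"
proof
  show "monoid_gen (irreducibles S) \<subseteq> S"
    using assms by (intro monoid_gen_least) (auto simp: irreducibles_def)
  show "S \<subseteq> monoid_gen (irreducibles S)"
  proof
    fix x assume "x \<in> S"
    then show "x \<in> monoid_gen (irreducibles S)"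
    proof (induction x rule: less_induct)
      case (less x)
      show ?case
      proof (cases "x = 0 \<or> x \<in> irreducibles S")
        case True then show ?thesis using subset_monoid_gen by (auto intro: monoid_gen.zero)
      next
        case False
        then obtain s t where "s \<in> S" "t \<in> S" "x = s + t" "s \<noteq> 0" "t \<noteq> 0"
          using less.prems unfolding irreducibles_def by auto
        then show ?thesis using less.IH monoid_gen_add by simp
      qed
    qed
  qed
qed

lemma minimal_gen_system_eq_irreducibles:
  assumes "is_minimal_gen_system A S"
  shows "A = irreducibles S"
proof -
  have gen: "monoid_gen A = S" and minimal: "\<And>B. B \<subset> A \<Longrightarrow> monoid_gen B \<noteq> S"
    using assms unfolding is_minimal_gen_system_def by auto
  have "irreducibles S \<subseteq> A"
    using irreducibles_subset_generators gen by blast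
  moreover have "monoid_gen (irreducibles S) = S"
    using monoid_gen_irreducibles submonoid_monoid_gen gen by blast
  ultimately show ?thesis using minimal by blast
qed

lemma is_minimal_gen_system_monoid_gen:
  assumes "A \<subseteq> irreducibles (monoid_gen A)"
  shows "is_minimal_gen_system A (monoid_gen A)"
  unfolding is_minimal_gen_system_def
  using assms irreducibles_subset_generators by (metis psubset_subset_trans subset_not_subset_eq)

lemma msg_eqI: "finite A \<Longrightarrow> is_minimal_gen_system A S \<Longrightarrow> msg S = A"
  unfolding msg_def by (rule the_equality) (auto dest: minimal_gen_system_eq_irreducibles)

lemma finite_irreducibles:
  assumes "numerical_semigroup S"
  shows "finite (irreducibles S)"
proof -
  obtain N where N: "\<forall>x\<ge>N. x \<in> S"
    using assms numerical_semigroup_eventually_mem by blast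
  have "x \<le> N + Suc N" if x: "x \<in> irreducibles S" for x
  proof (rule ccontr)
    assume "\<not> x \<le> N + Suc N"
    then have "N \<le> x - Suc N" "x - Suc N \<noteq> 0" "x = Suc N + (x - Suc N)" by auto
    moreover have "Suc N \<in> S" using N by simp
    ultimately show False using irreduciblesD[OF x, of "Suc N" "x - Suc N"] N by simp
  qed
  then have "irreducibles S \<subseteq> {..N + Suc N}" by auto
  then show ?thesis by (rule finite_subset) simp
qed

lemma msg_numerical_semigroup:
  assumes "numerical_semigroup S"
  shows "msg S = irreducibles S" and "monoid_gen (msg S) = S"
proof -
  have gen: "monoid_gen (irreducibles S) = S"
    using assms by (simp add: monoid_gen_irreducibles numerical_semigroup_iff)
  then have "is_minimal_gen_system (irreducibles S) S"
    using is_minimal_gen_system_monoid_gen[of "irreducibles S"] by simp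
  then show msg: "msg S = irreducibles S"
    using assms finite_irreducibles msg_eqI by blast
  show "monoid_gen (msg S) = S" using gen msg by simp
qed

lemma irreducibles_Int_subset: "T \<subseteq> S \<Longrightarrow> irreducibles S \<inter> T \<subseteq> irreducibles T"
  unfolding irreducibles_def by blast

lemma msg_monoid_gen_subset_msg:
  assumes "numerical_semigroup S" "B \<subseteq> msg S"
  shows "msg (monoid_gen B) = B"
proof (rule msg_eqI)
  note msg = msg_numerical_semigroup[OF assms(1)]
  show "finite B"
    using finite_subset[OF assms(2)] finite_irreducibles[OF assms(1)] msg(1) by simp
  have "monoid_gen B \<subseteq> S"
    using monoid_gen_mono[OF assms(2)] msg(2) by simp
  then have "irreducibles S \<inter> monoid_gen B \<subseteq> irreducibles (monoid_gen B)"
    by (rule irreducibles_Int_subset)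
  then have "B \<subseteq> irreducibles (monoid_gen B)"
    using assms(2) msg(1) subset_monoid_gen by blast
  then show "is_minimal_gen_system B (monoid_gen B)"
    by (rule is_minimal_gen_system_monoid_gen)
qed

lemma irreducible_dvd_imp_eq:
  assumes "submonoid S" "m \<in> S" "a \<in> irreducibles S" "m dvd a"
  shows "a = m"
proof (rule ccontr)
  assume "a \<noteq> m"
  obtain k where k: "a = m * k" using assms(4) by (rule dvdE)
  have "a \<noteq> 0" using assms(3) by (simp add: irreducibles_def)
  then have "m \<noteq> 0" "k \<noteq> 0" "k \<noteq> 1" using k \<open>a \<noteq> m\<close> by auto
  then obtain j where "k = Suc j" "j \<noteq> 0" by (metis One_nat_def not0_implies_Suc)
  then have sum: "a = m + j * m" and "j * m \<noteq> 0" using k \<open>m \<noteq> 0\<close> by (simp_all add: mult.commute)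
  have "j * m \<in> S" using assms(1,2) by (rule submonoid_mult_mem)
  from irreduciblesD[OF assms(3) assms(2) this sum] show False
    using \<open>m \<noteq> 0\<close> \<open>j * m \<noteq> 0\<close> by simp
qed

section \<open>Multiplicity and Apery sets\<close>

lemma multiplicity_monoid_gen:
  assumes "m \<in> A" "0 < m" "\<And>a. a \<in> A \<Longrightarrow> m \<le> a"
  shows "multiplicity (monoid_gen A) = m"
  unfolding multiplicity_def
proof (rule Least_equality)
  show "m \<in> monoid_gen A \<and> m \<noteq> 0" using assms subset_monoid_gen by auto
next
  fix y assume "y \<in> monoid_gen A \<and> y \<noteq> 0"
  then obtain a z where "a \<in> A" "y = a + z" by (auto elim: monoid_gen.cases)
  then show "m \<le> y" using assms(3) by fastforce
qed

lemma multiplicity_monoid_gen_subset_msg: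
  assumes "numerical_semigroup S" "B \<subseteq> msg S" "Min (msg S) \<in> B"
  shows "multiplicity (monoid_gen B) = Min (msg S)"
proof (rule multiplicity_monoid_gen)
  have "finite (msg S)" "0 \<notin> msg S"
    using finite_irreducibles[OF assms(1)] msg_numerical_semigroup(1)[OF assms(1)]
    by (simp_all add: irreducibles_def)
  then show "0 < Min (msg S)"
    using assms(2,3) by (metis gr0I subsetD)
  show "\<And>a. a \<in> B \<Longrightarrow> Min (msg S) \<le> a"
    using \<open>finite (msg S)\<close> assms(2) by auto
qed (use assms(3) in simp)

lemma multiplicity_mem:
  assumes "numerical_semigroup S"
  shows "multiplicity S \<in> S" and "0 < multiplicity S"
proof -
  obtain N where "\<forall>x\<ge>N. x \<in> S"
    using assms numerical_semigroup_eventually_mem by blast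
  then have "Suc N \<in> S \<and> Suc N \<noteq> 0" by simp
  then have "multiplicity S \<in> S \<and> multiplicity S \<noteq> 0"
    unfolding multiplicity_def by (rule LeastI)
  then show "multiplicity S \<in> S" "0 < multiplicity S" by auto
qed

lemma apery_w_mem:
  assumes "numerical_semigroup S"
  shows "apery_w S i \<in> S" and "apery_w S i mod multiplicity S = i mod multiplicity S"
proof -
  define m where "m = multiplicity S"
  obtain N where N: "\<forall>x\<ge>N. x \<in> S"
    using assms numerical_semigroup_eventually_mem by blast
  have "N \<le> N * m + i mod m"
    using multiplicity_mem(2)[OF assms] unfolding m_def by (simp add: trans_le_add1)
  then have "N * m + i mod m \<in> S \<and> (N * m + i mod m) mod m = i mod m" using N by simp
  then have "apery_w S i \<in> S \<and> apery_w S i mod m = i mod m"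
    unfolding apery_w_def m_def by (rule LeastI)
  then show "apery_w S i \<in> S" "apery_w S i mod multiplicity S = i mod multiplicity S"
    by (simp_all add: m_def)
qed

lemma apery_w_le: "x \<in> S \<Longrightarrow> x mod multiplicity S = i mod multiplicity S \<Longrightarrow> apery_w S i \<le> x"
  unfolding apery_w_def by (rule Least_le) simp

lemma MANS_if_apery_w_Suc_less:
  assumes "numerical_semigroup S"
    and "\<And>i. 1 \<le> i \<Longrightarrow> Suc i \<le> multiplicity S - 1 \<Longrightarrow> apery_w S i < apery_w S (Suc i)"
  shows "MANS S"
  unfolding MANS_def
proof (intro conjI assms(1) allI impI)
  fix i j assume i: "1 \<le> i" and "i < j" and "j \<le> multiplicity S - 1"
  from \<open>i < j\<close> have "Suc i \<le> j" by simp
  then have "j \<le> multiplicity S - 1 \<longrightarrow> apery_w S i < apery_w S j"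
    by (induction j rule: dec_induct) (use assms(2) i in \<open>auto intro: less_trans\<close>)
  then show "apery_w S i < apery_w S j" using \<open>j \<le> multiplicity S - 1\<close> by blast
qed

lemma MANS_residue_predecessor:
  assumes "MANS S" "b \<in> S" "\<not> multiplicity S dvd b"
  shows "\<exists>v\<in>S. v < b \<and> b mod multiplicity S = Suc (v mod multiplicity S)"
proof -
  define m where "m = multiplicity S"
  define r where "r = b mod m"
  have ns: "numerical_semigroup S" using assms(1) by (simp add: MANS_def)
  have "r \<noteq> 0" "r < m"
    using assms(3) multiplicity_mem(2)[OF ns] unfolding r_def m_def by (auto simp: dvd_eq_mod_eq_0)
  show ?thesis
  proof (cases "r = 1")
    case True
    have "0 \<in> S" using ns by (simp add: numerical_semigroup_def)
    moreover have "0 < b" using assms(3) by (auto intro: gr0I)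
    ultimately show ?thesis using True unfolding r_def m_def by auto
  next
    case False
    define v where "v = apery_w S (r - 1)"
    have "v < apery_w S r"
      using assms(1) False \<open>r \<noteq> 0\<close> \<open>r < m\<close> unfolding v_def MANS_def m_def by simp
    also have "apery_w S r \<le> b" using assms(2) unfolding r_def m_def by (simp add: apery_w_le)
    finally have "v < b" .
    moreover have "v \<in> S" "v mod m = r - 1"
      using apery_w_mem[OF ns, of "r - 1"] \<open>r < m\<close> unfolding v_def m_def by auto
    ultimately show ?thesis using \<open>r \<noteq> 0\<close> unfolding r_def m_def by (intro bexI[of _ v]) auto
  qed
qed

lemma MANS_apery_w_1_le:
  assumes "MANS S" "x \<in> S" "\<not> multiplicity S dvd x"
  shows "apery_w S 1 \<le> x"
proof -
  define m where "m = multiplicity S"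
  define r where "r = x mod m"
  have "r \<noteq> 0" "r < m"
    using assms multiplicity_mem(2) unfolding r_def m_def MANS_def by (auto simp: dvd_eq_mod_eq_0)
  then have "apery_w S 1 \<le> apery_w S r"
    using assms(1) unfolding MANS_def m_def by (cases "r = 1") (auto simp: less_imp_le)
  also have "apery_w S r \<le> x" using assms(2) unfolding r_def m_def by (simp add: apery_w_le)
  finally show ?thesis .
qed

lemma MANS_monoid_gen_if_residue_predecessors:
  fixes B :: "nat set"
  defines "T \<equiv> monoid_gen B"
  assumes "numerical_semigroup T"
    and "\<And>b. b \<in> B \<Longrightarrow> \<not> multiplicity T dvd b \<Longrightarrow>
      \<exists>v\<in>T. v < b \<and> b mod multiplicity T = Suc (v mod multiplicity T)"
  shows "MANS T"
proof (rule MANS_if_apery_w_Suc_less[OF assms(2)])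
  fix i assume i: "1 \<le> i" "Suc i \<le> multiplicity T - 1"
  define m where "m = multiplicity T"
  define x where "x = apery_w T (Suc i)"
  have "x \<in> T" "x mod m = Suc i"
    using apery_w_mem[OF assms(2), of "Suc i"] i unfolding x_def m_def by auto
  then obtain a where a: "a \<in> B" "\<not> m dvd a" "a \<le> x" "x - a \<in> T"
    using monoid_gen_nondvd_summand[of x B m] unfolding T_def by (auto simp: dvd_eq_mod_eq_0)
  then obtain v where v: "v \<in> T" "v < a" "a mod m = Suc (v mod m)"
    using assms(3) unfolding m_def by blast
  define y where "y = (x - a) + v"
  have "y \<in> T" using a(4) v(1) monoid_gen_add unfolding y_def T_def by blast
  have "y < x" using a(3) v(2) unfolding y_def by linarith
  have "Suc v mod m = a mod m" using v(3) by (metis mod_Suc mod_less_divisor not_less_eq zero_less_Suc)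
  then have "Suc y mod m = x mod m"
    unfolding y_def using a(3) by (metis add_Suc_right le_add_diff_inverse2 mod_add_right_eq)
  then have "y mod m = i" using \<open>x mod m = Suc i\<close> i by (auto simp: mod_Suc split: if_splits)
  then have "apery_w T i \<le> y" using \<open>y \<in> T\<close> i apery_w_le unfolding m_def by simp
  then show "apery_w T i < apery_w T (Suc i)" using \<open>y < x\<close> unfolding x_def by linarith
qed

lemma MANS_monoid_gen_if_contains_below:
  assumes "MANS S" "B \<subseteq> msg S" "Min (msg S) \<in> B" "c \<in> B" "c \<noteq> Min (msg S)"
    and "\<And>b. b \<in> B \<Longrightarrow> b < g" and "\<And>x. x \<in> S \<Longrightarrow> x < g \<Longrightarrow> x \<in> monoid_gen B"
  shows "MANS (monoid_gen B)"
proof -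
  define m where "m = Min (msg S)"
  define T where "T = monoid_gen B"
  have ns: "numerical_semigroup S" using assms(1) by (simp add: MANS_def)
  note msg = msg_numerical_semigroup[OF ns]
  have "msg S \<subseteq> S" using msg(1) by (auto simp: irreducibles_def)
  have multS: "multiplicity S = m"
    using multiplicity_monoid_gen_subset_msg[OF ns order.refl] assms(2,3) msg(2)
    unfolding m_def by auto
  have multT: "multiplicity T = m"
    using multiplicity_monoid_gen_subset_msg[OF ns assms(2,3)] unfolding T_def m_def .
  have "\<not> m dvd c"
    using irreducible_dvd_imp_eq[of S m c] assms(2-5) \<open>msg S \<subseteq> S\<close> msg(1) ns
    unfolding m_def by (auto simp: numerical_semigroup_iff)
  then have "apery_w S 1 \<le> c"
    using MANS_apery_w_1_le[OF assms(1)] assms(2,4) \<open>msg S \<subseteq> S\<close> unfolding multS by blast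
  then have "apery_w S 1 \<in> T"
    using assms(7)[OF apery_w_mem(1)[OF ns]] assms(6)[OF assms(4)] unfolding T_def by simp
  moreover have "m \<in> T"
    unfolding T_def m_def using subset_monoid_gen assms(3) by (rule subsetD)
  ultimately have nsT: "numerical_semigroup T"
    unfolding T_def using apery_w_mem(2)[OF ns, of 1] multiplicity_mem(2)[OF ns] multS
    by (intro numerical_semigroup_if_residue_one[OF submonoid_monoid_gen]) auto
  have "\<exists>v\<in>T. v < b \<and> b mod m = Suc (v mod m)" if b: "b \<in> B" "\<not> m dvd b" for b
  proof -
    have "b \<in> S" using b(1) assms(2) \<open>msg S \<subseteq> S\<close> by blast
    then obtain v where "v \<in> S" "v < b" "b mod m = Suc (v mod m)"
      using MANS_residue_predecessor[OF assms(1) \<open>b \<in> S\<close>] b(2) unfolding multS by blast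
    moreover have "v < g" using \<open>v < b\<close> assms(6)[OF b(1)] by simp
    ultimately show ?thesis using assms(7) unfolding T_def by blast
  qed
  then show ?thesis
    using MANS_monoid_gen_if_residue_predecessors[of B] nsT multT unfolding T_def by simp
qed

lemma MANS_monoid_gen_remove_Max_msg:
  assumes "MANS S" "2 < card (msg S)"
  shows "MANS (monoid_gen (msg S - {Max (msg S)}))"
proof -
  define M where "M = msg S"
  define g where "g = Max M"
  define m where "m = Min M"
  have ns: "numerical_semigroup S" using assms(1) by (simp add: MANS_def)
  have "finite M"
    using finite_irreducibles[OF ns] msg_numerical_semigroup(1)[OF ns] unfolding M_def by simp
  have "\<not> M \<subseteq> {m, g}"
  proof
    assume "M \<subseteq> {m, g}"
    then have "card M \<le> card {m, g}" by (simp add: card_mono)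
    also have "\<dots> \<le> 2" by (simp add: card_insert_if)
    finally show False using assms(2) unfolding M_def by simp
  qed
  then obtain c where c: "c \<in> M" "c \<noteq> m" "c \<noteq> g" by blast
  have lt_g: "b < g" if "b \<in> M - {g}" for b
    using that \<open>finite M\<close> unfolding g_def by (auto simp: order.not_eq_order_implies_strict)
  have "m \<le> c" "m \<in> M"
    using Min_le[OF \<open>finite M\<close> c(1)] Min_in[OF \<open>finite M\<close>] c(1) unfolding m_def by auto
  then have "m \<in> M - {g}" using lt_g c by fastforce
  have "x \<in> monoid_gen (M - {g})" if "x \<in> S" "x < g" for x
    using that monoid_gen_remove_greater msg_numerical_semigroup(2)[OF ns] unfolding M_def by blast
  then show ?thesis
    using MANS_monoid_gen_if_contains_below[OF assms(1), of "M - {g}" c g] \<open>m \<in> M - {g}\<close> c lt_g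
    unfolding M_def g_def m_def by blast
qed

theorem lemma4p2:
  fixes S :: "nat set" and n :: "nat \<Rightarrow> nat" and e :: nat
  assumes "MANS S"
    and "e \<ge> 2"
    and "strict_mono_on {1..e+1} n"
    and "msg S = n ` {1..e+1}"
  shows "MANS (monoid_gen (n ` {1..e})) \<and>
         embdim (monoid_gen (n ` {1..e})) = embdim S - 1"
proof -
  have inj: "inj_on n {1..e+1}" using assms(3) by (rule strict_mono_on_imp_inj_on)
  have max: "Max (msg S) = n (e + 1)"
    unfolding assms(4) using assms(3) by (intro Max_eqI) (auto simp: strict_mono_on_def le_less)
  have remove: "msg S - {n (e + 1)} = n ` {1..e}"
    using inj unfolding assms(4) by (auto simp: inj_on_eq_iff)
  have card_msg: "card (msg S) = e + 1" using card_image[OF inj] assms(4) by simp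
  have "inj_on n {1..e}" using inj by (rule inj_on_subset) simp
  then have card_gens: "card (n ` {1..e}) = e" by (simp add: card_image)
  have "MANS (monoid_gen (n ` {1..e}))"
    using MANS_monoid_gen_remove_Max_msg[OF assms(1)] max remove card_msg assms(2) by simp
  moreover have "msg (monoid_gen (n ` {1..e})) = n ` {1..e}"
    using msg_monoid_gen_subset_msg assms(1) remove unfolding MANS_def by blast
  ultimately show ?thesis using card_msg card_gens by (simp add: embdim_def)
qed

end
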